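(* Let $\triangle P_1P_2P_3$ be a (closed, filled) triangle in $D$ with $\rho(\psi_{\triangle P_1P_2P_3})=\frac{2}{5}$. Then the number of periodic orbits of $\psi_{\triangle P_1P_2P_3}$ of period $5$ is at most $6$.
   Context: $D$ is the open unit disk in $\mathbb R^2$ and $S^1$ its boundary circle, identified with $\mathbb R/\mathbb Z$ via the counterclockwise normalized angle. For a closed convex set $U\subset D$ and $v\in S^1$, $\psi_U(v)$ is the point $w\in S^1\setminus\{v\}$ such that the line $vw$ meets $U$ and $U$ lies in the closed half-plane to the left of the directed line from $v$ to $w$ (the first point counterclockwise from $v$ whose chord from $v$ is tangent to $U$). $\psi_U$ is an orientation-preserving homeomorphism of $S^1$. For an orientation-preserving homeomorphism $f$ of $S^1$, $\rho(f)=\lim_{n\to\infty}(\overline f^n(x)-x)/n$ where $\overline f$ is the lift of $f$ to $\mathbb R$ with $\overline f(0)\in[0,1)$. *)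

theory Defs
  imports "HOL-Analysis.Analysis"
begin

text \<open>The plane R^2 is identified with the complex numbers. D is the open unit disk,
  S^1 the unit circle, identified with R/Z via t \<mapsto> exp(2 pi i t).\<close>

definition unit_disk :: "complex set" where
  "unit_disk = ball 0 1"

definition unit_circle :: "complex set" where
  "unit_circle = sphere 0 1"

definition circ_pt :: "real \<Rightarrow> complex" where
  "circ_pt t = exp (2 * of_real pi * \<i> * of_real t)"

text \<open>Signed cross product: cross a b \<ge> 0 iff b lies (weakly) to the left of direction a.\<close>
definition cross :: "complex \<Rightarrow> complex \<Rightarrow> real" where
  "cross a b = Im (cnj a * b)"

definition psi :: "complex set \<Rightarrow> complex \<Rightarrow> complex" where
  "psi U v = (THE w. w \<in> unit_circle \<and> w \<noteq> v \<and>
       (\<exists>p\<in>U. cross (w - v) (p - v) = 0) \<and>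
       (\<forall>p\<in>U. cross (w - v) (p - v) \<ge> 0))"

definition circle_lift :: "(complex \<Rightarrow> complex) \<Rightarrow> real \<Rightarrow> real" where
  "circle_lift f = (THE F. continuous_on UNIV F \<and> (\<forall>x. circ_pt (F x) = f (circ_pt x))
       \<and> 0 \<le> F 0 \<and> F 0 < 1)"

definition rot_num :: "(complex \<Rightarrow> complex) \<Rightarrow> real" where
  "rot_num f = lim (\<lambda>n. (((circle_lift f) ^^ n) 0 - 0) / real n)"

definition periodic_pt :: "(complex \<Rightarrow> complex) \<Rightarrow> nat \<Rightarrow> complex \<Rightarrow> bool" where
  "periodic_pt f n z \<longleftrightarrow> z \<in> unit_circle \<and> 0 < n \<and> (f ^^ n) z = z \<and>
      (\<forall>k. 0 < k \<and> k < n \<longrightarrow> (f ^^ k) z \<noteq> z)"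

definition orbit :: "(complex \<Rightarrow> complex) \<Rightarrow> complex \<Rightarrow> complex set" where
  "orbit f z = {(f ^^ k) z | k. True}"

definition periodic_orbits :: "(complex \<Rightarrow> complex) \<Rightarrow> nat \<Rightarrow> complex set set" where
  "periodic_orbits f n = {orbit f z | z. periodic_pt f n z}"

end

theory Submission
  imports Defs
begin

(* The map psi of the triangle is piecewise a chord map h_p, sending v to the other end of the
  chord through v and a vertex p, and each h_p is an involutive Moebius transformation of the
  circle. Along a period-5 orbit the vertices used at consecutive points differ (equal ones
  would give period 2), so the itinerary is a proper 3-colouring of a 5-cycle and, read from a
  suitable orbit point v, it is c, a, b, a, b. Then v is fixed by h_b h_a h_b h_a h_c, which
  is not the identity (it moves h_c e for an endpoint e of the chord through a and b) and so
  has at most two fixed points on the circle. Conjugation by h_c carries the fixed points for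
  the itinerary c, b, a, b, a to those for c, a, b, a, b, and a point and its image are never
  both served by c unless the triangle is degenerate; so each vertex c accounts for at most
  two orbits. *)

section \<open>Chord maps of the unit circle\<close>

lemma mem_unit_circle_iff [simp]: "v \<in> unit_circle \<longleftrightarrow> cmod v = 1"
  by (simp add: unit_circle_def)

lemma mem_unit_disk_iff [simp]: "v \<in> unit_disk \<longleftrightarrow> cmod v < 1"
  by (simp add: unit_disk_def)

lemma cnj_mult_self_eq_1: "cmod v = 1 \<Longrightarrow> cnj v * v = 1"
  by (metis complex_cnj_one complex_norm_square mult.commute norm_one of_real_1 power_one)

text \<open>For \<open>|p| < 1\<close> and \<open>|v| = 1\<close> this is the second intersection of the line through
  \<open>v\<close> and \<open>p\<close> with the circle; as a map of \<open>v\<close> it is the disk automorphism exchanging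
  \<open>0\<close> and \<open>p\<close>.\<close>

definition chord_end :: "complex \<Rightarrow> complex \<Rightarrow> complex" where
  "chord_end p v = (p - v) / (1 - cnj p * v)"

lemma chord_end_denom_nonzero:
  assumes "cmod p < 1" "cmod v = 1"
  shows "1 - cnj p * v \<noteq> 0"
proof
  assume "1 - cnj p * v = 0"
  then have "cmod (cnj p * v) = 1" by simp
  with assms show False by (simp add: norm_mult)
qed

lemma chord_end_denom_eq:
  assumes "cmod v = 1"
  shows "1 - cnj p * v = - v * cnj (p - v)"
  using cnj_mult_self_eq_1[OF assms] by (simp add: algebra_simps)

lemma norm_chord_end:
  assumes "cmod p < 1" "cmod v = 1"
  shows "cmod (chord_end p v) = 1"
proof -
  have "cmod (1 - cnj p * v) = cmod (p - v)"
    unfolding chord_end_denom_eq[OF assms(2)] using assms(2)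
    by (simp add: norm_mult del: complex_cnj_diff)
  moreover have "p \<noteq> v" using assms by auto
  ultimately show ?thesis by (simp add: chord_end_def norm_divide)
qed

lemma chord_end_minus:
  assumes "cmod p < 1" "cmod v = 1"
  shows "chord_end p v - v = of_real (2 * (1 - Re (cnj v * p)) / (cmod (p - v))\<^sup>2) * (p - v)"
proof -
  have vv: "cnj v * v = 1" by (rule cnj_mult_self_eq_1[OF assms(2)])
  have num: "p - v - v * (1 - cnj p * v) = - v * of_real (2 * (1 - Re (cnj v * p)))"
  proof -
    have "p - v - v * (1 - cnj p * v) = v * (cnj v * p + cnj p * v - 2)"
      using vv by (simp add: algebra_simps)
    also have "cnj v * p + cnj p * v = of_real (2 * Re (cnj v * p))"
      by (simp add: complex_eq_iff algebra_simps)
    finally show ?thesis by (simp add: algebra_simps)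
  qed
  have "chord_end p v - v = (p - v - v * (1 - cnj p * v)) / (1 - cnj p * v)"
    using chord_end_denom_nonzero[OF assms] by (simp add: chord_end_def field_simps)
  also have "\<dots> = of_real (2 * (1 - Re (cnj v * p))) / cnj (p - v)"
    unfolding num unfolding chord_end_denom_eq[OF assms(2)] using assms(2) by auto
  also have "\<dots> = of_real (2 * (1 - Re (cnj v * p)) / (cmod (p - v))\<^sup>2) * (p - v)"
    by (subst complex_div_cnj) (simp del: complex_cnj_diff)
  finally show ?thesis .
qed

lemma chord_end_direction:
  assumes "cmod p < 1" "cmod v = 1"
  obtains t where "t > 0" "chord_end p v - v = of_real t * (p - v)"
proof
  have "Re (cnj v * p) < 1"
    using complex_Re_le_cmod[of "cnj v * p"] assms by (simp add: norm_mult)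
  moreover have "p \<noteq> v" using assms by auto
  ultimately show "2 * (1 - Re (cnj v * p)) / (cmod (p - v))\<^sup>2 > 0" by simp
qed (rule chord_end_minus[OF assms])

lemma chord_end_neq:
  assumes "cmod p < 1" "cmod v = 1"
  shows "chord_end p v \<noteq> v"
proof -
  obtain t where "t > 0" "chord_end p v - v = of_real t * (p - v)"
    using chord_end_direction[OF assms] .
  moreover have "p \<noteq> v" using assms by auto
  ultimately show ?thesis by auto
qed

lemma cross_swap: "cross x y = - cross y x"
  by (simp add: cross_def algebra_simps)

lemma cross_self [simp]: "cross x x = 0"
  by (simp add: cross_def)

lemma cross_of_real_left [simp]: "cross (of_real t * x) y = t * cross x y"
  by (simp add: cross_def algebra_simps)

lemma cross_of_real_right [simp]: "cross x (of_real t * y) = t * cross x y"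
  by (simp add: cross_def algebra_simps)

lemma cross_eq_0_imp_parallel:
  assumes "cross e f = 0" "e \<noteq> 0"
  obtains t where "f = of_real t * e"
proof
  have "complex_of_real (Re (cnj e * f)) = cnj e * f"
    using assms(1) by (simp add: complex_eq_iff cross_def)
  then have "of_real (Re (cnj e * f) / (cmod e)\<^sup>2) * e = f * (cnj e * e) / of_real ((cmod e)\<^sup>2)"
    by (simp add: algebra_simps)
  also have "\<dots> = f"
    using assms(2) by (simp add: mult.commute[of "cnj e"] complex_norm_square[symmetric])
  finally show "f = of_real (Re (cnj e * f) / (cmod e)\<^sup>2) * e" by simp
qed

lemma chord_end_unique:
  assumes "cmod p < 1" "cmod v = 1" "cmod w = 1" "w \<noteq> v" "cross (w - v) (p - v) = 0"
  shows "w = chord_end p v"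
proof -
  obtain t where "p - v = of_real t * (w - v)"
    using cross_eq_0_imp_parallel[OF assms(5)] assms(4) by auto
  then have p: "p = v + of_real t * (w - v)" by (simp add: algebra_simps)
  have vv: "v * cnj v = 1" and ww: "w * cnj w = 1"
    using cnj_mult_self_eq_1[OF assms(2)] cnj_mult_self_eq_1[OF assms(3)]
    by (simp_all add: mult.commute)
  have "v * w * cnj p = w * (v * cnj v) + of_real t * (v * (w * cnj w) - w * (v * cnj v))"
    unfolding p by (simp add: algebra_simps)
  also have "\<dots> = w + of_real t * (v - w)" using vv ww by simp
  finally have "w * (1 - cnj p * v) = p - v" unfolding p by (simp add: algebra_simps)
  then show ?thesis
    using chord_end_denom_nonzero[OF assms(1,2)] by (simp add: chord_end_def field_simps)
qed

lemma chord_end_chord_end: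
  assumes "cmod p < 1" "cmod v = 1"
  shows "chord_end p (chord_end p v) = v"
proof (rule chord_end_unique[symmetric, OF assms(1) norm_chord_end[OF assms] assms(2)])
  obtain t where "chord_end p v - v = of_real t * (p - v)"
    using chord_end_direction[OF assms] .
  then have c: "chord_end p v = v + of_real t * (p - v)" by (simp add: algebra_simps)
  show "cross (v - chord_end p v) (p - chord_end p v) = 0"
    unfolding c by (simp add: cross_def algebra_simps)
qed (use chord_end_neq[OF assms] in auto)

lemma Re_cnj_mult_diff_neg:
  assumes "cmod v = 1" "cmod w \<le> 1" "w \<noteq> v"
  shows "Re (cnj v * (w - v)) < 0"
proof -
  have "(cmod w)\<^sup>2 = (cmod v)\<^sup>2 + 2 * Re (cnj v * (w - v)) + (cmod (w - v))\<^sup>2"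
    unfolding cmod_power2 by (simp add: power2_eq_square algebra_simps)
  then have "(cmod w)\<^sup>2 = 1 + 2 * Re (cnj v * (w - v)) + (cmod (w - v))\<^sup>2"
    using assms(1) by simp
  moreover have "(cmod w)\<^sup>2 \<le> 1" using assms(2) by (simp add: power_le_one)
  moreover have "(cmod (w - v))\<^sup>2 > 0" using assms(3) by simp
  ultimately show ?thesis by linarith
qed

lemma cross_Re_identity:
  "cross x y * Re (cnj v * z) + cross y z * Re (cnj v * x) + cross z x * Re (cnj v * y) = 0"
  by (simp add: cross_def algebra_simps)

text \<open>Vectors from a point \<open>v\<close> of the circle into the closed disk lie in the open
  half-plane \<open>Re (cnj v * x) < 0\<close>, on which \<open>cross x y \<ge> 0\<close> is a transitive relation.\<close>

lemma cross_nonneg_trans: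
  assumes "Re (cnj v * x) < 0" "Re (cnj v * y) < 0" "Re (cnj v * z) < 0"
    and "cross x y \<ge> 0" "cross y z \<ge> 0"
  shows "cross x z \<ge> 0"
proof -
  have "cross x y * Re (cnj v * z) \<le> 0" "cross y z * Re (cnj v * x) \<le> 0"
    using assms by (simp_all add: mult_nonneg_nonpos)
  then have "cross z x * Re (cnj v * y) \<ge> 0"
    using cross_Re_identity[of x y v z] by linarith
  then have "cross z x \<le> 0" using assms(2) by (simp add: zero_le_mult_iff)
  then show ?thesis using cross_swap[of x z] by linarith
qed

lemma cross_eq_0_between:
  assumes "Re (cnj v * e) < 0" "Re (cnj v * f) < 0"
    and "cross e f = 0" "cross e d \<ge> 0" "cross d f \<ge> 0"
  shows "cross e d = 0"
proof -
  have "cross e d * Re (cnj v * f) \<le> 0" "cross d f * Re (cnj v * e) \<le> 0"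
    using assms by (simp_all add: mult_nonneg_nonpos)
  moreover have "cross f e * Re (cnj v * d) = 0" using assms(3) cross_swap[of f e] by simp
  ultimately have "cross e d * Re (cnj v * f) = 0"
    using cross_Re_identity[of e d v f] by linarith
  then show ?thesis using assms(2) by simp
qed

section \<open>Support lines and the map psi\<close>

definition left_of_ray :: "complex \<Rightarrow> complex \<Rightarrow> complex set \<Rightarrow> bool" where
  "left_of_ray v p S \<longleftrightarrow> (\<forall>q\<in>S. 0 \<le> cross (p - v) (q - v))"

lemma convex_left_halfplane: "convex {q. 0 \<le> cross e (q - v)}"
proof -
  have "{q. 0 \<le> cross e (q - v)} = {q. inner (\<i> * e) q \<ge> inner (\<i> * e) v}"
    by (auto simp: cross_def inner_complex_def algebra_simps)
  then show ?thesis by (simp add: convex_halfspace_ge)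
qed

lemma left_of_ray_convex_hull:
  assumes "left_of_ray v p S"
  shows "left_of_ray v p (convex hull S)"
proof -
  have "convex hull S \<subseteq> {q. 0 \<le> cross (p - v) (q - v)}"
    using assms by (intro hull_minimal convex_left_halfplane) (auto simp: left_of_ray_def)
  then show ?thesis by (auto simp: left_of_ray_def)
qed

lemma psi_eq_chord_end:
  assumes U: "U \<subseteq> unit_disk" and "p \<in> U" and v: "cmod v = 1" and "left_of_ray v p U"
  shows "psi U v = chord_end p v"
  unfolding psi_def
proof (rule the_equality)
  have p: "cmod p < 1" using assms by auto
  obtain t where t: "t > 0" "chord_end p v - v = of_real t * (p - v)"
    using chord_end_direction[OF p v] .
  show "chord_end p v \<in> unit_circle \<and> chord_end p v \<noteq> v \<and>
      (\<exists>q\<in>U. cross (chord_end p v - v) (q - v) = 0) \<and>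
      (\<forall>q\<in>U. 0 \<le> cross (chord_end p v - v) (q - v))"
    using norm_chord_end[OF p v] chord_end_neq[OF p v] \<open>p \<in> U\<close> \<open>left_of_ray v p U\<close> t
    by (auto simp: left_of_ray_def intro: bexI[of _ p])
next
  fix w
  assume "w \<in> unit_circle \<and> w \<noteq> v \<and> (\<exists>q\<in>U. cross (w - v) (q - v) = 0) \<and>
      (\<forall>q\<in>U. 0 \<le> cross (w - v) (q - v))"
  then obtain q where w: "cmod w = 1" "w \<noteq> v" and "q \<in> U" "cross (w - v) (q - v) = 0"
    and left: "\<forall>q\<in>U. 0 \<le> cross (w - v) (q - v)"
    by auto
  have "cross (w - v) (p - v) = 0"
  proof (rule cross_eq_0_between)
    show "Re (cnj v * (w - v)) < 0" using Re_cnj_mult_diff_neg[OF v] w by simp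
    show "Re (cnj v * (q - v)) < 0"
      using Re_cnj_mult_diff_neg[OF v, of q] \<open>q \<in> U\<close> U v by force
  qed (use \<open>cross (w - v) (q - v) = 0\<close> left \<open>p \<in> U\<close> \<open>q \<in> U\<close> \<open>left_of_ray v p U\<close>
    in \<open>auto simp: left_of_ray_def\<close>)
  then show "w = chord_end p v"
    using chord_end_unique[OF _ v w] assms by auto
qed

lemma ex_left_of_ray:
  assumes "finite S" "S \<noteq> {}" "S \<subseteq> unit_disk" "cmod v = 1"
  shows "\<exists>p\<in>S. left_of_ray v p S"
  using assms(1-3)
proof (induction S rule: finite_ne_induct)
  case (singleton x)
  then show ?case by (simp add: left_of_ray_def)
next
  case (insert x F)
  then obtain p where "p \<in> F" and p: "left_of_ray v p F" by auto
  have half: "Re (cnj v * (q - v)) < 0" if "q \<in> insert x F" for q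
  proof (rule Re_cnj_mult_diff_neg[OF assms(4)])
    show "cmod q \<le> 1" "q \<noteq> v" using that insert.prems assms(4) by auto
  qed
  show ?case
  proof (cases "0 \<le> cross (p - v) (x - v)")
    case True
    then show ?thesis using \<open>p \<in> F\<close> p by (auto simp: left_of_ray_def)
  next
    case False
    then have xp: "0 \<le> cross (x - v) (p - v)" using cross_swap[of "p - v" "x - v"] by linarith
    have "0 \<le> cross (x - v) (q - v)" if "q \<in> insert x F" for q
    proof (cases "q = x")
      case False
      then have "q \<in> F" using that by simp
      then show ?thesis
        using cross_nonneg_trans[OF half half half xp] p \<open>p \<in> F\<close> that
        by (simp add: left_of_ray_def)
    qed simp
    then show ?thesis by (auto simp: left_of_ray_def)
  qed
qed

lemma psi_convex_hull_eq_chord_end: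
  assumes "finite S" "S \<noteq> {}" "convex hull S \<subseteq> unit_disk" "cmod v = 1"
  obtains p where "p \<in> S" "left_of_ray v p S" "psi (convex hull S) v = chord_end p v"
proof -
  have "S \<subseteq> unit_disk" using hull_subset[of S convex] assms(3) by (rule order_trans)
  then obtain p where p: "p \<in> S" "left_of_ray v p S"
    using ex_left_of_ray[OF assms(1,2) _ assms(4)] by blast
  have "psi (convex hull S) v = chord_end p v"
  proof (rule psi_eq_chord_end[OF assms(3) _ assms(4)])
    show "p \<in> convex hull S" using p(1) by (rule hull_inc)
    show "left_of_ray v p (convex hull S)" using p(2) by (rule left_of_ray_convex_hull)
  qed
  with p show ?thesis by (rule that)
qed

lemma collinear_if_left_of_both_rays:
  assumes c: "cmod c < 1" and v: "cmod v = 1"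
    and "left_of_ray v c S" "left_of_ray (chord_end c v) c S"
  shows "collinear S"
proof -
  define u where "u = chord_end c v"
  have u: "cmod u = 1" "chord_end c u = v" "u \<noteq> v"
    using norm_chord_end[OF c v] chord_end_chord_end[OF c v] chord_end_neq[OF c v]
    by (simp_all add: u_def)
  obtain t where t: "t > 0" "u - v = of_real t * (c - v)"
    using chord_end_direction[OF c v] u_def by blast
  obtain t' where t': "t' > 0" "chord_end c u - u = of_real t' * (c - u)"
    using chord_end_direction[OF c u(1)] .
  have on_chord: "cross (u - v) (q - v) = 0" if "q \<in> S" for q
  proof -
    have "0 \<le> cross (u - v) (q - v)"
      using assms(3) that t by (simp add: left_of_ray_def)
    moreover have "0 \<le> cross (v - u) (q - u)"
      using assms(4) that t' by (simp add: left_of_ray_def u(2) flip: u_def)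
    moreover have "cross (v - u) (q - u) = - cross (u - v) (q - v)"
      by (simp add: cross_def algebra_simps)
    ultimately show ?thesis by linarith
  qed
  show ?thesis unfolding collinear_def
  proof (rule exI[of _ "u - v"], intro ballI)
    fix x y assume "x \<in> S" "y \<in> S"
    have "u - v \<noteq> 0" using u(3) by simp
    obtain s where "x - v = of_real s * (u - v)"
      using cross_eq_0_imp_parallel[OF on_chord[OF \<open>x \<in> S\<close>] \<open>u - v \<noteq> 0\<close>] .
    moreover obtain s' where "y - v = of_real s' * (u - v)"
      using cross_eq_0_imp_parallel[OF on_chord[OF \<open>y \<in> S\<close>] \<open>u - v \<noteq> 0\<close>] .
    ultimately have "x - y = of_real s * (u - v) - of_real s' * (u - v)"
      by (metis diff_diff_eq2 diff_add_cancel)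
    then have "x - y = (s - s') *\<^sub>R (u - v)"
      by (simp add: scaleR_conv_of_real algebra_simps)
    then show "\<exists>c. x - y = c *\<^sub>R (u - v)" ..
  qed
qed

section \<open>Moebius maps of the circle\<close>

lemma card_le_2_if_no_three_distinct:
  assumes "\<And>x y z. x \<in> S \<Longrightarrow> y \<in> S \<Longrightarrow> z \<in> S \<Longrightarrow> x = y \<or> x = z \<or> y = z"
  shows "finite S \<and> card S \<le> 2"
proof (rule ccontr)
  assume "\<not> (finite S \<and> card S \<le> 2)"
  then obtain T where "T \<subseteq> S" "card T = 3"
    using infinite_arbitrarily_large[of S 3] obtain_subset_with_card_n[of 3 S]
    by (metis not_less_eq_eq numeral_2_eq_2 numeral_3_eq_3)
  then obtain x y z where "T = {x, y, z}" "x \<noteq> y" "y \<noteq> z" "x \<noteq> z"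
    by (auto simp: card_3_iff)
  then show False
    using assms[of x y z] \<open>T \<subseteq> S\<close> by auto
qed

lemma moebius_moebius:
  fixes z :: complex
  assumes "c' * z + d' \<noteq> 0"
  shows "moebius a b c d (moebius a' b' c' d' z) =
    moebius (a * a' + b * c') (a * b' + b * d') (c * a' + d * c') (c * b' + d * d') z"
proof -
  let ?q = "c' * z + d'"
  have "moebius a b c d (moebius a' b' c' d' z) =
      ((a * (a' * z + b') + b * ?q) / ?q) / ((c * (a' * z + b') + d * ?q) / ?q)"
    unfolding moebius_def using assms by (simp add: field_simps)
  also have "\<dots> = (a * (a' * z + b') + b * ?q) / (c * (a' * z + b') + d * ?q)"
    using assms by simp
  finally show ?thesis by (simp add: moebius_def algebra_simps)
qed

lemma moebius_eq_id_if_three_fixed_points: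
  fixes a b c d :: complex
  assumes "a * d - b * c \<noteq> 0" and "distinct [x1, x2, x3]" and "0 \<notin> {x1, x2, x3}"
    and "\<forall>x\<in>{x1, x2, x3}. moebius a b c d x = x"
  shows "moebius a b c d = id"
proof -
  have root: "c * x * x + (d - a) * x - b = 0" if "x \<in> {x1, x2, x3}" for x
  proof -
    have fixed: "(a * x + b) / (c * x + d) = x" using assms(4) that by (auto simp: moebius_def)
    moreover have "c * x + d \<noteq> 0" using fixed assms(3) that by auto
    ultimately have "a * x + b = x * (c * x + d)" by (simp add: field_simps)
    then show ?thesis by (simp add: algebra_simps)
  qed
  have "(x1 - x2) * (c * (x1 + x2) + (d - a)) = 0" "(x1 - x3) * (c * (x1 + x3) + (d - a)) = 0"
    using root[of x1] root[of x2] root[of x3] by (simp_all add: algebra_simps)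
  then have "c * (x1 + x2) + (d - a) = 0" "c * (x1 + x3) + (d - a) = 0"
    using assms(2) by auto
  moreover have "c * (x2 - x3) = (c * (x1 + x2) + (d - a)) - (c * (x1 + x3) + (d - a))"
    by (simp add: algebra_simps)
  ultimately have "c * (x2 - x3) = 0" by simp
  then have c: "c = 0" using assms(2) by simp
  then have "d = a" "b = 0"
    using \<open>c * (x1 + x2) + (d - a) = 0\<close> root[of x1] by simp_all
  with c assms(1) show ?thesis by (auto simp: moebius_def)
qed

definition moebius_on_circle :: "(complex \<Rightarrow> complex) \<Rightarrow> bool" where
  "moebius_on_circle F \<longleftrightarrow>
    (\<exists>a b c d. a * d - b * c \<noteq> 0 \<and> (\<forall>v. cmod v = 1 \<longrightarrow> F v = moebius a b c d v))"

lemma moebius_on_circle_chord_end: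
  assumes "cmod p < 1"
  shows "moebius_on_circle (chord_end p)"
  unfolding moebius_on_circle_def
proof (intro exI conjI allI impI)
  have "cmod (p * cnj p) < 1"
    using assms by (simp add: norm_mult abs_square_less_1 flip: power2_eq_square)
  then show "(-1) * 1 - p * (- cnj p) \<noteq> 0" by auto
  show "chord_end p v = moebius (-1) p (- cnj p) 1 v" for v
    by (simp add: chord_end_def moebius_def algebra_simps)
qed

lemma moebius_on_circle_comp:
  assumes "moebius_on_circle F" "moebius_on_circle G" "\<And>v. cmod v = 1 \<Longrightarrow> cmod (G v) = 1"
  shows "moebius_on_circle (F \<circ> G)"
proof -
  obtain a b c d where det: "a * d - b * c \<noteq> 0"
    and F: "\<And>v. cmod v = 1 \<Longrightarrow> F v = moebius a b c d v"
    using assms(1) unfolding moebius_on_circle_def by blast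
  obtain a' b' c' d' where det': "a' * d' - b' * c' \<noteq> 0"
    and G: "\<And>v. cmod v = 1 \<Longrightarrow> G v = moebius a' b' c' d' v"
    using assms(2) unfolding moebius_on_circle_def by blast
  have "(a * a' + b * c') * (c * b' + d * d') - (a * b' + b * d') * (c * a' + d * c') =
      (a * d - b * c) * (a' * d' - b' * c')"
    by (simp add: algebra_simps)
  then have "(a * a' + b * c') * (c * b' + d * d') - (a * b' + b * d') * (c * a' + d * c') \<noteq> 0"
    using det det' by simp
  moreover have "(F \<circ> G) v =
      moebius (a * a' + b * c') (a * b' + b * d') (c * a' + d * c') (c * b' + d * d') v"
    if "cmod v = 1" for v
  proof -
    have "cmod (moebius a' b' c' d' v) = 1" using assms(3) G that by metis
    then have "c' * v + d' \<noteq> 0" by (auto simp: moebius_def)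
    then show ?thesis using F G assms(3) that by (simp add: moebius_moebius)
  qed
  ultimately show ?thesis unfolding moebius_on_circle_def by blast
qed

lemma fixed_points_moebius_on_circle:
  assumes "moebius_on_circle F" "\<exists>v. cmod v = 1 \<and> F v \<noteq> v"
  shows "finite {v. cmod v = 1 \<and> F v = v} \<and> card {v. cmod v = 1 \<and> F v = v} \<le> 2"
proof (rule card_le_2_if_no_three_distinct, rule ccontr)
  fix x y z
  assume fixed: "x \<in> {v. cmod v = 1 \<and> F v = v}" "y \<in> {v. cmod v = 1 \<and> F v = v}"
    "z \<in> {v. cmod v = 1 \<and> F v = v}" and "\<not> (x = y \<or> x = z \<or> y = z)"
  obtain a b c d where det: "a * d - b * c \<noteq> 0"
    and F: "\<And>v. cmod v = 1 \<Longrightarrow> F v = moebius a b c d v"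
    using assms(1) unfolding moebius_on_circle_def by blast
  have "moebius a b c d = id"
    by (rule moebius_eq_id_if_three_fixed_points[OF det, of x y z])
      (use fixed F \<open>\<not> (x = y \<or> x = z \<or> y = z)\<close> in auto)
  then show False using assms(2) F by auto
qed

section \<open>The return map of the itinerary c, a, b, a, b\<close>

lemma ex_fixed_point_chord_end_comp:
  assumes a: "cmod a < 1" and b: "cmod b < 1" and "a \<noteq> b"
  obtains e where "cmod e = 1" "chord_end b (chord_end a e) = e"
proof -
  define f where "f t = cmod (a + of_real t * (b - a))" for t
  define T where "T = 2 / cmod (b - a)"
  have "cmod (b - a) > 0" using \<open>a \<noteq> b\<close> by simp
  then have "T > 0" "T * cmod (b - a) = 2" by (simp_all add: T_def)
  have "f T \<ge> cmod (of_real T * (b - a)) - cmod a"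
    unfolding f_def by (metis add.commute norm_diff_ineq)
  also have "cmod (of_real T * (b - a)) = 2"
    using \<open>T > 0\<close> \<open>T * cmod (b - a) = 2\<close> by (simp add: norm_mult)
  finally have "f 0 \<le> 1" "1 \<le> f T" using a by (simp_all add: f_def)
  moreover have "\<forall>t. 0 \<le> t \<and> t \<le> T \<longrightarrow> isCont f t"
    unfolding f_def by (intro allI impI continuous_intros)
  ultimately obtain t where "0 \<le> t" "t \<le> T" "f t = 1"
    using IVT[of f 0 1 T] \<open>T > 0\<close> by auto
  define e where "e = a + of_real t * (b - a)"
  have e: "cmod e = 1" using \<open>f t = 1\<close> by (simp add: f_def e_def)
  then have "t \<noteq> 0" using a by (auto simp: e_def)
  then have be: "b - e = of_real (1 - 1 / t) * (a - e)"
    by (simp add: e_def field_simps)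
  define e' where "e' = chord_end a e"
  obtain s where s: "e' - e = of_real s * (a - e)"
    using chord_end_direction[OF a e] unfolding e'_def by metis
  have "e = chord_end b e'"
  proof (rule chord_end_unique[OF b _ e])
    show "cmod e' = 1" unfolding e'_def by (rule norm_chord_end[OF a e])
    show "e \<noteq> e'" unfolding e'_def using chord_end_neq[OF a e] by simp
    have "e - e' = of_real (- s) * (a - e)" "b - e' = of_real (1 - 1 / t - s) * (a - e)"
      using s be by (simp_all add: algebra_simps)
    then show "cross (e - e') (b - e') = 0"
      by (simp only: cross_of_real_left cross_of_real_right cross_self mult_zero_right)
  qed
  then show ?thesis using that e unfolding e'_def by simp
qed

text \<open>Composition reads right to left: this is \<open>psi\<^sup>5\<close> along an orbit whose vertex
  itinerary is \<open>c, a, b, a, b\<close>.\<close>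

definition cabab_map :: "complex \<Rightarrow> complex \<Rightarrow> complex \<Rightarrow> complex \<Rightarrow> complex" where
  "cabab_map c a b = chord_end b \<circ> chord_end a \<circ> chord_end b \<circ> chord_end a \<circ> chord_end c"

lemma moebius_on_circle_cabab_map:
  assumes "cmod a < 1" "cmod b < 1" "cmod c < 1"
  shows "moebius_on_circle (cabab_map c a b)"
  unfolding cabab_map_def using assms
  by (intro moebius_on_circle_comp moebius_on_circle_chord_end) (auto simp: norm_chord_end)

lemma cabab_map_not_id:
  assumes a: "cmod a < 1" and b: "cmod b < 1" and c: "cmod c < 1" and "a \<noteq> b"
  shows "\<exists>v. cmod v = 1 \<and> cabab_map c a b v \<noteq> v"
proof -
  obtain e where e: "cmod e = 1" and ba: "chord_end b (chord_end a e) = e"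
    using ex_fixed_point_chord_end_comp[OF a b \<open>a \<noteq> b\<close>] .
  have "cabab_map c a b (chord_end c e) = e"
    by (simp add: cabab_map_def chord_end_chord_end[OF c e] ba)
  then show ?thesis
    using norm_chord_end[OF c e] chord_end_neq[OF c e] by metis
qed

lemma fixed_points_cabab_map:
  assumes "cmod a < 1" "cmod b < 1" "cmod c < 1" "a \<noteq> b"
  shows "finite {v. cmod v = 1 \<and> cabab_map c a b v = v}"
    and "card {v. cmod v = 1 \<and> cabab_map c a b v = v} \<le> 2"
  using fixed_points_moebius_on_circle[OF moebius_on_circle_cabab_map cabab_map_not_id] assms
  by simp_all

lemma cabab_map_fixed_swap:
  assumes a: "cmod a < 1" and b: "cmod b < 1" and c: "cmod c < 1" and v: "cmod v = 1"
    and "cabab_map c b a v = v"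
  shows "cabab_map c a b (chord_end c v) = chord_end c v"
proof -
  define y where "y = chord_end c v"
  have y: "cmod y = 1" unfolding y_def by (rule norm_chord_end[OF c v])
  have v_eq: "v = chord_end a (chord_end b (chord_end a (chord_end b y)))"
    using assms(5) by (simp add: cabab_map_def y_def)
  have "cabab_map c a b y = chord_end b (chord_end a (chord_end b (chord_end a v)))"
    by (simp add: cabab_map_def y_def chord_end_chord_end[OF c v])
  also have "\<dots> = y"
    unfolding v_eq using y by (simp add: chord_end_chord_end norm_chord_end a b)
  finally show ?thesis unfolding y_def .
qed

definition cabab_points :: "complex set \<Rightarrow> complex \<Rightarrow> complex \<Rightarrow> complex \<Rightarrow> complex set" where
  "cabab_points S c a b = {v. cmod v = 1 \<and> left_of_ray v c S \<and> cabab_map c a b v = v}"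

lemma card_cabab_points_Un:
  assumes a: "cmod a < 1" and b: "cmod b < 1" and c: "cmod c < 1" and "a \<noteq> b"
    and "\<not> collinear S"
  shows "finite (cabab_points S c a b \<union> cabab_points S c b a)"
    and "card (cabab_points S c a b \<union> cabab_points S c b a) \<le> 2"
proof -
  let ?W = "cabab_points S c a b" and ?W' = "cabab_points S c b a"
  let ?F = "{v. cmod v = 1 \<and> cabab_map c a b v = v}"
  have F: "finite ?F" "card ?F \<le> 2" using fixed_points_cabab_map[OF a b c \<open>a \<noteq> b\<close>] by auto
  have "?W \<subseteq> ?F" by (auto simp: cabab_points_def)
  moreover have "chord_end c ` ?W' \<subseteq> ?F"
    using cabab_map_fixed_swap[OF a b c] by (auto simp: cabab_points_def norm_chord_end[OF c])
  ultimately have sub: "?W \<union> chord_end c ` ?W' \<subseteq> ?F" by blast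
  have inj: "inj_on (chord_end c) ?W'"
    by (rule inj_on_inverseI[where g = "chord_end c"])
      (auto simp: cabab_points_def chord_end_chord_end[OF c])
  have "?W \<inter> chord_end c ` ?W' = {}"
    using collinear_if_left_of_both_rays[OF c] \<open>\<not> collinear S\<close> by (auto simp: cabab_points_def)
  have fin: "finite ?W" "finite (chord_end c ` ?W')"
    using finite_subset[OF sub F(1)] by auto
  then have "finite ?W'" using finite_imageD[OF _ inj] by blast
  with fin show "finite (?W \<union> ?W')" by simp
  have "card (?W \<union> ?W') \<le> card ?W + card ?W'" by (rule card_Un_le)
  also have "\<dots> = card (?W \<union> chord_end c ` ?W')"
    using card_Un_disjoint[OF fin \<open>?W \<inter> chord_end c ` ?W' = {}\<close>] card_image[OF inj] by simp
  also have "\<dots> \<le> 2" using card_mono[OF F(1) sub] F(2) by simp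
  finally show "card (?W \<union> ?W') \<le> 2" .
qed

section \<open>Period-5 orbits\<close>

text \<open>In a proper 3-colouring of a 5-cycle one colour occurs once and the other two alternate.\<close>

lemma ex_cabab_rotation:
  fixes l :: "nat \<Rightarrow> 'a"
  assumes "distinct [x, y, z]"
    and "\<And>k. l (k + 5) = l k" "\<And>k. l k \<in> {x, y, z}" "\<And>k. l k \<noteq> l (Suc k)"
  shows "\<exists>r. l r \<noteq> l (r + 2) \<and> l (r + 1) = l (r + 3) \<and> l (r + 2) = l (r + 4)"
proof -
  have per: "l 5 = l 0" "l 6 = l 1" "l 7 = l 2" "l 8 = l 3"
    using assms(2)[of 0] assms(2)[of 1] assms(2)[of 2] assms(2)[of 3] by simp_all
  have "l 0 \<noteq> l 1" "l 1 \<noteq> l 2" "l 2 \<noteq> l 3" "l 3 \<noteq> l 4" "l 4 \<noteq> l 0"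
    using assms(4)[of 0] assms(4)[of 1] assms(4)[of 2] assms(4)[of 3] assms(4)[of 4] per(1)
    by (simp_all add: numeral_eq_Suc)
  moreover have "l 0 \<in> {x, y, z}" "l 1 \<in> {x, y, z}" "l 2 \<in> {x, y, z}" "l 3 \<in> {x, y, z}"
    "l 4 \<in> {x, y, z}"
    using assms(3) by blast+
  ultimately have "(l 0 \<noteq> l 2 \<and> l 1 = l 3 \<and> l 2 = l 4) \<or> (l 1 \<noteq> l 3 \<and> l 2 = l 4 \<and> l 3 = l 0) \<or>
      (l 2 \<noteq> l 4 \<and> l 3 = l 0 \<and> l 4 = l 1) \<or> (l 3 \<noteq> l 0 \<and> l 4 = l 1 \<and> l 0 = l 2) \<or>
      (l 4 \<noteq> l 1 \<and> l 0 = l 2 \<and> l 1 = l 3)"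
    using assms(1) by (elim insertE emptyE) simp_all
  then have "\<exists>r\<in>{0, 1, 2, 3, 4}. l r \<noteq> l (r + 2) \<and> l (r + 1) = l (r + 3) \<and> l (r + 2) = l (r + 4)"
    using per by (simp add: numeral_eq_Suc)
  then show ?thesis by blast
qed

lemma funpow_add_apply: "(f ^^ m) ((f ^^ n) x) = (f ^^ (m + n)) x"
  by (simp add: funpow_add)

lemma funpow_add_period:
  assumes "(f ^^ n) x = x"
  shows "(f ^^ (k + n * r)) x = (f ^^ k) x"
  using funpow_mod_eq[OF assms, of "k + n * r"] funpow_mod_eq[OF assms, of k] by simp

lemma orbit_funpow_eq:
  assumes "(f ^^ n) x = x" "0 < n"
  shows "orbit f ((f ^^ r) x) = orbit f x"
proof -
  have "k + n * r - r + r = k + n * r" for k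
    using \<open>0 < n\<close> by (simp add: trans_le_add2)
  then have "(f ^^ k) x = (f ^^ (k + n * r - r)) ((f ^^ r) x)" for k
    by (simp only: funpow_add_apply funpow_add_period[OF assms(1)])
  then show ?thesis
    by (auto simp: orbit_def funpow_add_apply)
qed

lemma funpow_fixed_in_periodic_orbit:
  assumes "(f ^^ n) x = x" "0 < n" "(f ^^ m) ((f ^^ k) x) = (f ^^ k) x"
  shows "(f ^^ m) x = x"
proof -
  have "k \<le> n * k" using \<open>0 < n\<close> by simp
  then have x: "(f ^^ (n * k - k)) ((f ^^ k) x) = x"
    using funpow_add_period[OF assms(1), of 0 k] by (simp add: funpow_add_apply)
  have "(f ^^ m) x = (f ^^ (n * k - k)) ((f ^^ m) ((f ^^ k) x))"
    by (subst (1) x[symmetric]) (simp add: funpow_add_apply add_ac)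
  also have "\<dots> = x" using assms(3) x by simp
  finally show ?thesis .
qed

lemma psi_convex_hull_itinerary:
  fixes S :: "complex set"
  defines "f \<equiv> psi (convex hull S)"
  assumes S: "finite S" "S \<noteq> {}" "convex hull S \<subseteq> unit_disk" and "cmod x = 1"
  obtains l where "\<And>k. l k \<in> S" "\<And>k. left_of_ray ((f ^^ k) x) (l k) S"
    "\<And>k. (f ^^ Suc k) x = chord_end (l k) ((f ^^ k) x)"
    "\<And>k. cmod ((f ^^ k) x) = 1"
    "\<And>k n. (f ^^ n) x = x \<Longrightarrow> l (k + n) = l k"
proof -
  define vertex where "vertex v = (SOME p. p \<in> S \<and> left_of_ray v p S \<and> f v = chord_end p v)" for v
  have vertex: "vertex v \<in> S \<and> left_of_ray v (vertex v) S \<and> f v = chord_end (vertex v) v"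
    if v: "cmod v = 1" for v
  proof -
    obtain p where "p \<in> S" "left_of_ray v p S" "f v = chord_end p v"
      using psi_convex_hull_eq_chord_end[OF S v] unfolding f_def .
    then show ?thesis unfolding vertex_def by (rule someI[where x = p, OF conjI[OF _ conjI]])
  qed
  have in_disk: "cmod p < 1" if "p \<in> S" for p
    using that hull_subset[of S convex] S(3) by auto
  have circle: "cmod ((f ^^ k) x) = 1" for k
  proof (induction k)
    case (Suc k)
    then show ?case using vertex[OF Suc] norm_chord_end[OF in_disk] by simp
  qed (use \<open>cmod x = 1\<close> in simp)
  show thesis
  proof (rule that[of "\<lambda>k. vertex ((f ^^ k) x)"])
    fix k n
    assume "(f ^^ n) x = x"
    from funpow_add_period[OF this, of k 1]
    show "vertex ((f ^^ (k + n)) x) = vertex ((f ^^ k) x)" by simp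
  qed (use vertex[OF circle] circle in auto)
qed

lemma period5_orbit_meets_cabab_points:
  fixes P1 P2 P3 :: complex
  defines "S \<equiv> {P1, P2, P3}"
  defines "f \<equiv> psi (convex hull S)"
  assumes "\<not> collinear S" "convex hull S \<subseteq> unit_disk" "periodic_pt f 5 x"
  obtains c a b v where "c \<in> S" "a \<in> S" "b \<in> S" "distinct [c, a, b]"
    "v \<in> cabab_points S c a b" "orbit f v = orbit f x"
proof -
  have "distinct [P1, P2, P3]"
    using \<open>\<not> collinear S\<close> by (auto simp: S_def collinear_2 insert_commute)
  have x: "cmod x = 1" "(f ^^ 5) x = x" "\<And>k. 0 < k \<Longrightarrow> k < 5 \<Longrightarrow> (f ^^ k) x \<noteq> x"
    using \<open>periodic_pt f 5 x\<close> by (auto simp: periodic_pt_def)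
  have "finite S" "S \<noteq> {}" by (simp_all add: S_def)
  obtain l where l: "\<And>k. l k \<in> S" "\<And>k. left_of_ray ((f ^^ k) x) (l k) S"
    and step: "\<And>k. (f ^^ Suc k) x = chord_end (l k) ((f ^^ k) x)"
    and circle: "\<And>k. cmod ((f ^^ k) x) = 1"
    and periodic: "\<And>k n. (f ^^ n) x = x \<Longrightarrow> l (k + n) = l k"
    by (rule psi_convex_hull_itinerary[OF \<open>finite S\<close> \<open>S \<noteq> {}\<close> assms(4) x(1), folded f_def]) blast
  have in_disk: "cmod p < 1" if "p \<in> S" for p
    using that hull_subset[of S convex] assms(4) by auto
  have "l k \<noteq> l (Suc k)" for k
  proof
    assume "l k = l (Suc k)"
    then have twice: "(f ^^ 2) ((f ^^ k) x) = (f ^^ k) x"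
      using step[of "Suc k"] step[of k] chord_end_chord_end[OF in_disk[OF l(1)] circle]
      by (simp add: numeral_2_eq_2 funpow_add_apply)
    have "(f ^^ 2) x = x" by (rule funpow_fixed_in_periodic_orbit[OF x(2) _ twice]) simp
    with x(3)[of 2] show False by simp
  qed
  then obtain r where r: "l r \<noteq> l (r + 2)" "l (r + 1) = l (r + 3)" "l (r + 2) = l (r + 4)"
    using ex_cabab_rotation[of P1 P2 P3 l, OF \<open>distinct [P1, P2, P3]\<close> periodic[OF x(2)]
        l(1)[unfolded S_def]]
    by blast
  have "cabab_map (l r) (l (r + 1)) (l (r + 2)) ((f ^^ r) x) = (f ^^ (r + 5)) x"
    using r by (simp add: cabab_map_def step numeral_eq_Suc del: funpow.simps)
  also have "\<dots> = (f ^^ r) x" using funpow_add_period[OF x(2), of r 1] by simp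
  finally have "(f ^^ r) x \<in> cabab_points S (l r) (l (r + 1)) (l (r + 2))"
    using l(2) circle by (simp add: cabab_points_def)
  moreover have "distinct [l r, l (r + 1), l (r + 2)]"
    using \<open>\<And>k. l k \<noteq> l (Suc k)\<close>[of r] \<open>\<And>k. l k \<noteq> l (Suc k)\<close>[of "r + 1"] r(1) by auto
  moreover have "orbit f ((f ^^ r) x) = orbit f x" using orbit_funpow_eq[OF x(2)] by simp
  ultimately show thesis using that[OF l(1) l(1) l(1)] by blast
qed

lemma card_cabab_points_triangle:
  fixes P1 P2 P3 :: complex
  defines "S \<equiv> {P1, P2, P3}"
  defines "V \<equiv> {v. \<exists>c\<in>S. \<exists>a\<in>S. \<exists>b\<in>S. distinct [c, a, b] \<and> v \<in> cabab_points S c a b}"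
  assumes "\<not> collinear S" "convex hull S \<subseteq> unit_disk"
  shows "finite V" "card V \<le> 6"
proof -
  let ?C = "\<lambda>c a b. cabab_points S c a b \<union> cabab_points S c b a"
  have disk: "cmod p < 1" if "p \<in> S" for p
    using that hull_subset[of S convex] assms(4) by auto
  have "distinct [P1, P2, P3]"
    using assms(3) by (auto simp: S_def collinear_2 insert_commute)
  have C: "finite (?C c a b)" "card (?C c a b) \<le> 2"
    if "c \<in> S" "a \<in> S" "b \<in> S" "a \<noteq> b" for c a b
    using card_cabab_points_Un[OF disk disk disk \<open>a \<noteq> b\<close> assms(3)] that by simp_all
  have V: "V = ?C P1 P2 P3 \<union> ?C P2 P1 P3 \<union> ?C P3 P1 P2"
  proof
    show "V \<subseteq> ?C P1 P2 P3 \<union> ?C P2 P1 P3 \<union> ?C P3 P1 P2"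
    proof
      fix v assume "v \<in> V"
      then obtain c a b where "c \<in> S" "a \<in> S" "b \<in> S" "distinct [c, a, b]"
        and v: "v \<in> cabab_points S c a b"
        unfolding V_def by blast
      then have "c = P1 \<and> {a, b} = {P2, P3} \<or> c = P2 \<and> {a, b} = {P1, P3} \<or>
          c = P3 \<and> {a, b} = {P1, P2}"
        by (auto simp: S_def)
      with v show "v \<in> ?C P1 P2 P3 \<union> ?C P2 P1 P3 \<union> ?C P3 P1 P2"
        by (auto simp: doubleton_eq_iff)
    qed
    show "?C P1 P2 P3 \<union> ?C P2 P1 P3 \<union> ?C P3 P1 P2 \<subseteq> V"
      using \<open>distinct [P1, P2, P3]\<close> unfolding V_def by (auto simp: S_def)
  qed
  show "finite V"
    unfolding V using C(1) \<open>distinct [P1, P2, P3]\<close> by (simp add: S_def)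
  have "card V \<le> card (?C P1 P2 P3) + card (?C P2 P1 P3) + card (?C P3 P1 P2)"
    unfolding V by (meson card_Un_le add_right_mono order_trans)
  also have "\<dots> \<le> 2 + 2 + 2"
    using \<open>distinct [P1, P2, P3]\<close> by (intro add_mono C(2)) (auto simp: S_def)
  finally show "card V \<le> 6" by simp
qed

theorem theorem5p2:
  fixes P1 P2 P3 :: complex
  assumes "\<not> collinear {P1, P2, P3}"
    and "convex hull {P1, P2, P3} \<subseteq> unit_disk"
    and "rot_num (psi (convex hull {P1, P2, P3})) = 2 / 5"
  shows "finite (periodic_orbits (psi (convex hull {P1, P2, P3})) 5) \<and>
         card (periodic_orbits (psi (convex hull {P1, P2, P3})) 5) \<le> 6"
proof -
  let ?S = "{P1, P2, P3}" and ?f = "psi (convex hull {P1, P2, P3})"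
  define V where "V = {v. \<exists>c\<in>?S. \<exists>a\<in>?S. \<exists>b\<in>?S. distinct [c, a, b] \<and> v \<in> cabab_points ?S c a b}"
  have sub: "periodic_orbits ?f 5 \<subseteq> orbit ?f ` V"
  proof
    fix orb assume "orb \<in> periodic_orbits ?f 5"
    then obtain x where x: "orb = orbit ?f x" "periodic_pt ?f 5 x"
      by (auto simp: periodic_orbits_def)
    obtain c a b v where "c \<in> ?S" "a \<in> ?S" "b \<in> ?S" "distinct [c, a, b]"
      "v \<in> cabab_points ?S c a b" "orbit ?f v = orbit ?f x"
      by (rule period5_orbit_meets_cabab_points[OF assms(1,2) x(2)])
    then have "v \<in> V" unfolding V_def by blast
    then show "orb \<in> orbit ?f ` V"
      unfolding x(1) by (rule rev_image_eqI) (use \<open>orbit ?f v = orbit ?f x\<close> in simp)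
  qed
  have "finite V" "card V \<le> 6"
    unfolding V_def by (rule card_cabab_points_triangle[OF assms(1,2)])+
  with finite_surj[OF _ sub] surj_card_le[OF _ sub] show ?thesis by simp
qed

end
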